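(* Let $f,g\in\mathbb{R}[x_1,\dots,x_n]$ be forms, where $f$ is nonconstant with strictly positive coefficients and $g(x)>0$ for all $x\in\mathbb{R}_+^n\setminus\{0\}$. Then there exists an integer $l\ge1$ such that $f^lg$ has strictly positive coefficients.
   Context: A form is a homogeneous polynomial. A form $f=\sum_{|w|=d}a_wx^w$ of degree $d$ has strictly positive coefficients if $a_w>0$ for every $w\in\mathbb{Z}_{\ge0}^n$ with $|w|=d$. $\mathbb{R}_+^n=\{x\in\mathbb{R}^n: x_i\ge0\ \forall i\}$. *)

theory Defs
  imports Complex_Main "HOL-Library.Poly_Mapping"
begin

text \<open>Real polynomials in the variables x_0,...,x_(n-1): finitely supported maps from
exponent vectors (nat =>0 nat, variable index to exponent) to real coefficients.
Multiplication is the convolution product provided by Poly_Mapping.\<close>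

type_synonym rpoly = "(nat \<Rightarrow>\<^sub>0 nat) \<Rightarrow>\<^sub>0 real"

definition mdeg :: "(nat \<Rightarrow>\<^sub>0 nat) \<Rightarrow> nat" where
  "mdeg w = (\<Sum>i\<in>Poly_Mapping.keys w. Poly_Mapping.lookup w i)"

definition monos_deg :: "nat \<Rightarrow> nat \<Rightarrow> (nat \<Rightarrow>\<^sub>0 nat) set" where
  "monos_deg n d = {w. Poly_Mapping.keys w \<subseteq> {..<n} \<and> mdeg w = d}"

definition is_form :: "nat \<Rightarrow> nat \<Rightarrow> rpoly \<Rightarrow> bool" where
  "is_form n d p \<longleftrightarrow> Poly_Mapping.keys p \<subseteq> monos_deg n d"

definition strictly_pos_form :: "nat \<Rightarrow> nat \<Rightarrow> rpoly \<Rightarrow> bool" where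
  "strictly_pos_form n d p \<longleftrightarrow> is_form n d p \<and> (\<forall>w\<in>monos_deg n d. Poly_Mapping.lookup p w > 0)"

definition peval :: "rpoly \<Rightarrow> (nat \<Rightarrow> real) \<Rightarrow> real" where
  "peval p x = (\<Sum>w\<in>Poly_Mapping.keys p. Poly_Mapping.lookup p w * (\<Prod>i\<in>Poly_Mapping.keys w. x i ^ Poly_Mapping.lookup w i))"

end

theory Submission
  imports Defs "HOL-Analysis.Analysis"
begin

text \<open>Let s = x_0 + \<dots> + x_(n-1). Since g has a positive minimum on the simplex, Polya's
theorem gives \<epsilon> > 0 with s^m g \<ge> \<epsilon> s^(m+e) coefficientwise for all large m: multiplied by
a! / (N! (N+e)^e), the coefficient of s^N g at a differs from g(a/(N+e)) by O(1/N). Comparing the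
positive coefficients of f with those of s^d, write f = c s^d + h with c > 0 and 0 \<le> h \<le> C s^d,
and bound g \<ge> -M s^e. In the binomial expansion f^l g = \<Sum>_k (l choose k) c^k h^(l-k) s^(dk) g
the terms with k \<ge> K are nonnegative, while a term with k < K is bounded below by
-(l choose k) c^k M C^K h^(l-k-K) s^(d(k+K)+e); this is absorbed by the term k+K as soon as
(l choose k+K) / (l choose k) is large, which holds for large l. What remains dominates the top
term c^l s^(dl) g \<ge> c^l \<epsilon> s^(dl+e), whose coefficients are all positive.\<close>

abbreviation lookup where "lookup \<equiv> Poly_Mapping.lookup"
abbreviation keys where "keys \<equiv> Poly_Mapping.keys"

lemma lookup_times_keys:
  fixes p q :: "('a::monoid_add) \<Rightarrow>\<^sub>0 ('b::semiring_0)"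
  shows "lookup (p * q) k = (\<Sum>a\<in>keys p. \<Sum>b\<in>keys q. lookup p a * lookup q b when k = a + b)"
proof -
  have inner: "Sum_any (\<lambda>b. lookup q b when k = a + b) = (\<Sum>b\<in>keys q. lookup q b when k = a + b)" for a
    by (rule Sum_any.expand_superset) (auto simp: in_keys_iff)
  have "lookup (p * q) k = Sum_any (\<lambda>a. lookup p a * (\<Sum>b\<in>keys q. lookup q b when k = a + b))"
    by (simp add: lookup_mult inner)
  also have "\<dots> = (\<Sum>a\<in>keys p. lookup p a * (\<Sum>b\<in>keys q. lookup q b when k = a + b))"
    by (rule Sum_any.expand_superset) (auto simp: in_keys_iff)
  finally show ?thesis
    by (simp add: sum_distrib_left mult_when)
qed

lemma lookup_times_diff:
  fixes p q :: "('a::cancel_comm_monoid_add) \<Rightarrow>\<^sub>0 ('b::semiring_0)"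
  shows "lookup (p * q) k = (\<Sum>a\<in>keys p. lookup p a * lookup q (k - a) when (\<exists>b. k = a + b))"
  unfolding lookup_times_keys
proof (rule sum.cong[OF refl])
  fix a
  show "(\<Sum>b\<in>keys q. lookup p a * lookup q b when k = a + b)
      = (lookup p a * lookup q (k - a) when (\<exists>b. k = a + b))"
  proof (cases "\<exists>b. k = a + b")
    case True
    then obtain b0 where b0: "k = a + b0" by blast
    have "(\<Sum>b\<in>keys q. lookup p a * lookup q b when k = a + b)
        = (\<Sum>b\<in>keys q. lookup p a * lookup q b when b = b0)"
      by (rule sum.cong) (auto simp: b0 when_def)
    also have "\<dots> = lookup p a * lookup q b0"
      by (cases "b0 \<in> keys q") (auto simp: when_def in_keys_iff)
    finally show ?thesis using b0 by simp
  qed (auto simp: when_def)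
qed

lemma lookup_single_times:
  fixes p :: "('a::cancel_comm_monoid_add) \<Rightarrow>\<^sub>0 ('b::semiring_0)"
  shows "lookup (Poly_Mapping.single u c * p) k = (c * lookup p (k - u) when (\<exists>b. k = u + b))"
  by (cases "c = 0") (simp_all add: when_def lookup_times_diff)

lemma ex_add_iff_lookup_le:
  "(\<exists>c. a = b + c) \<longleftrightarrow> (\<forall>i. lookup b i \<le> lookup (a :: 'x \<Rightarrow>\<^sub>0 nat) i)"
proof
  assume "\<forall>i. lookup b i \<le> lookup a i"
  then have "a = b + (a - b)"
    by (auto simp: poly_mapping_eq_iff fun_eq_iff lookup_add lookup_minus)
  then show "\<exists>c. a = b + c" by blast
qed (auto simp: lookup_add)

section \<open>The coefficientwise order\<close>

definition const_poly :: "real \<Rightarrow> rpoly" where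
  "const_poly c = Poly_Mapping.single 0 c"

definition coeff_le :: "rpoly \<Rightarrow> rpoly \<Rightarrow> bool" where
  "coeff_le p q \<longleftrightarrow> (\<forall>k. lookup p k \<le> lookup q k)"

abbreviation coeff_nonneg :: "rpoly \<Rightarrow> bool" where
  "coeff_nonneg p \<equiv> coeff_le 0 p"

lemma coeff_nonneg_iff: "coeff_nonneg p \<longleftrightarrow> (\<forall>k. lookup p k \<ge> 0)"
  by (simp add: coeff_le_def)

lemma coeff_le_refl: "coeff_le p p"
  by (simp add: coeff_le_def)

lemma coeff_le_trans [trans]: "coeff_le p q \<Longrightarrow> coeff_le q r \<Longrightarrow> coeff_le p r"
  unfolding coeff_le_def by (meson order_trans)

lemma coeff_le_add: "coeff_le p q \<Longrightarrow> coeff_le p' q' \<Longrightarrow> coeff_le (p + p') (q + q')"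
  by (simp add: coeff_le_def lookup_add add_mono)

lemma coeff_le_uminus: "coeff_le p q \<Longrightarrow> coeff_le (- q) (- p)"
  by (simp add: coeff_le_def)

lemma coeff_nonneg_add: "coeff_nonneg p \<Longrightarrow> coeff_nonneg q \<Longrightarrow> coeff_nonneg (p + q)"
  using coeff_le_add[of 0 p 0 q] by simp

lemma coeff_nonneg_sum: "(\<And>i. i \<in> I \<Longrightarrow> coeff_nonneg (f i)) \<Longrightarrow> coeff_nonneg (sum f I)"
  by (auto simp: coeff_nonneg_iff lookup_sum intro!: sum_nonneg)

lemma coeff_nonneg_times: "coeff_nonneg p \<Longrightarrow> coeff_nonneg q \<Longrightarrow> coeff_nonneg (p * q)"
  unfolding coeff_nonneg_iff lookup_times_keys by (auto intro!: sum_nonneg simp: when_def)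

lemma coeff_nonneg_one: "coeff_nonneg 1"
  by (simp add: coeff_nonneg_iff lookup_one when_def)

lemma coeff_nonneg_power: "coeff_nonneg p \<Longrightarrow> coeff_nonneg (p ^ k)"
  by (induction k) (simp_all add: coeff_nonneg_one coeff_nonneg_times)

lemma coeff_le_times_right:
  assumes "coeff_le p q" "coeff_nonneg r"
  shows "coeff_le (p * r) (q * r)"
proof -
  have "coeff_nonneg ((q - p) * r)"
    using assms by (intro coeff_nonneg_times) (simp_all add: coeff_le_def lookup_minus)
  then show ?thesis
    by (simp add: coeff_le_def lookup_minus left_diff_distrib)
qed

lemma coeff_le_times_left: "coeff_le p q \<Longrightarrow> coeff_nonneg r \<Longrightarrow> coeff_le (r * p) (r * q)"
  using coeff_le_times_right[of p q r] by (simp only: mult.commute[of r])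

lemma coeff_le_power: "coeff_le p q \<Longrightarrow> coeff_nonneg p \<Longrightarrow> coeff_le (p ^ k) (q ^ k)"
proof (induction k)
  case (Suc k)
  have "coeff_nonneg q" using Suc.prems by (rule coeff_le_trans[rotated])
  have "coeff_le (p * p ^ k) (q * p ^ k)"
    using Suc.prems by (simp add: coeff_le_times_right coeff_nonneg_power)
  moreover have "coeff_le (q * p ^ k) (q * q ^ k)"
    using Suc \<open>coeff_nonneg q\<close> by (simp add: coeff_le_times_left)
  ultimately show ?case by (simp add: coeff_le_trans)
qed (simp add: coeff_le_refl)

lemma lookup_const_poly_times: "lookup (const_poly c * p) k = c * lookup p k"
  unfolding const_poly_def lookup_single_times by (simp add: when_def)

lemma const_poly_times: "const_poly a * const_poly b = const_poly (a * b)"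
  by (simp add: const_poly_def mult_single)

lemma const_poly_power: "const_poly a ^ k = const_poly (a ^ k)"
  by (induction k) (simp_all add: const_poly_def mult_single)

lemma of_nat_eq_const_poly: "(of_nat k :: rpoly) = const_poly (real k)"
  by (simp add: const_poly_def)

lemma uminus_const_poly_times: "- (const_poly c * p) = const_poly (- c) * p"
  by (simp add: poly_mapping_eq_iff fun_eq_iff lookup_const_poly_times)

lemma coeff_le_const_poly_times:
  "coeff_le p q \<Longrightarrow> a \<ge> 0 \<Longrightarrow> coeff_le (const_poly a * p) (const_poly a * q)"
  by (simp add: coeff_le_def lookup_const_poly_times mult_left_mono)

lemma coeff_nonneg_const_poly_times:
  "a \<ge> 0 \<Longrightarrow> coeff_nonneg p \<Longrightarrow> coeff_nonneg (const_poly a * p)"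
  using coeff_le_const_poly_times[of 0 p a] by simp

lemma mdeg_eq_sum: "finite S \<Longrightarrow> keys w \<subseteq> S \<Longrightarrow> mdeg w = (\<Sum>i\<in>S. lookup w i)"
  unfolding mdeg_def by (rule sum.mono_neutral_left) (auto simp: in_keys_iff)

lemma mdeg_eq_sum_lessThan: "keys w \<subseteq> {..<n} \<Longrightarrow> mdeg w = (\<Sum>i<n. lookup w i)"
  by (rule mdeg_eq_sum) auto

lemma keys_add_nat: "keys (a + b) = keys a \<union> keys (b :: 'a \<Rightarrow>\<^sub>0 nat)"
  by (auto simp: in_keys_iff lookup_add)

lemma keys_diff_nat: "keys (a - b) \<subseteq> keys (a :: 'a \<Rightarrow>\<^sub>0 nat)"
  by (auto simp: in_keys_iff lookup_minus)

lemma mdeg_add: "mdeg (a + b) = mdeg a + mdeg b"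
proof -
  let ?S = "keys a \<union> keys b"
  have "mdeg (a + b) = (\<Sum>i\<in>?S. lookup (a + b) i)"
    by (rule mdeg_eq_sum) (auto simp: keys_add_nat)
  also have "\<dots> = (\<Sum>i\<in>?S. lookup a i) + (\<Sum>i\<in>?S. lookup b i)"
    by (simp add: lookup_add sum.distrib)
  also have "\<dots> = mdeg a + mdeg b"
    using mdeg_eq_sum[of ?S a] mdeg_eq_sum[of ?S b] by simp
  finally show ?thesis .
qed

lemma mdeg_single: "mdeg (Poly_Mapping.single i k) = k"
  unfolding mdeg_def by (cases "k = 0") auto

lemma mdeg_eq_0_iff: "mdeg w = 0 \<longleftrightarrow> w = 0"
  unfolding mdeg_def by (auto simp: in_keys_iff poly_mapping_eq_iff fun_eq_iff)

lemma monos_deg_add: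
  "a \<in> monos_deg n d \<Longrightarrow> b \<in> monos_deg n e \<Longrightarrow> a + b \<in> monos_deg n (d + e)"
  by (auto simp: monos_deg_def keys_add_nat mdeg_add)

lemma sum_lookup_monos_deg: "w \<in> monos_deg n d \<Longrightarrow> (\<Sum>i<n. lookup w i) = d"
  by (auto simp: monos_deg_def dest: mdeg_eq_sum_lessThan)

lemma lookup_le_monos_deg:
  assumes "w \<in> monos_deg n d"
  shows "lookup w i \<le> d"
proof (cases "i < n")
  case True
  then show ?thesis
    using member_le_sum[of i "{..<n}" "lookup w"] sum_lookup_monos_deg[OF assms] by simp
next
  case False
  then have "i \<notin> keys w"
    using assms by (auto simp: monos_deg_def)
  then show ?thesis
    by (simp add: in_keys_iff)
qed

lemma is_form_times: "is_form n d p \<Longrightarrow> is_form n e q \<Longrightarrow> is_form n (d + e) (p * q)"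
  unfolding is_form_def using keys_mult[of p q] by (force intro: monos_deg_add)

lemma is_form_power: "is_form n d p \<Longrightarrow> is_form n (k * d) (p ^ k)"
proof (induction k)
  case 0
  show ?case by (auto simp: is_form_def monos_deg_def mdeg_def)
qed (auto dest: is_form_times)

lemma lookup_form_eq_0: "is_form n d p \<Longrightarrow> w \<notin> monos_deg n d \<Longrightarrow> lookup p w = 0"
  unfolding is_form_def by (auto simp: in_keys_iff)

lemma peval_form:
  assumes "is_form n e g"
  shows "peval g y = (\<Sum>b\<in>keys g. lookup g b * (\<Prod>i<n. y i ^ lookup b i))"
  unfolding peval_def
proof (rule sum.cong[OF refl])
  fix b assume "b \<in> keys g"
  then have "keys b \<subseteq> {..<n}" using assms unfolding is_form_def monos_deg_def by auto
  then have "(\<Prod>i\<in>keys b. y i ^ lookup b i) = (\<Prod>i<n. y i ^ lookup b i)"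
    by (intro prod.mono_neutral_left) (auto simp: in_keys_iff)
  then show "lookup g b * (\<Prod>i\<in>keys b. y i ^ lookup b i) = lookup g b * (\<Prod>i<n. y i ^ lookup b i)"
    by simp
qed

section \<open>Powers of the sum of the variables\<close>

definition var_sum :: "nat \<Rightarrow> rpoly" where
  "var_sum n = (\<Sum>i<n. Poly_Mapping.single (Poly_Mapping.single i 1) 1)"

definition multinomial_coeff :: "nat \<Rightarrow> nat \<Rightarrow> (nat \<Rightarrow>\<^sub>0 nat) \<Rightarrow> real" where
  "multinomial_coeff n N a = (if a \<in> monos_deg n N then fact N / (\<Prod>i<n. fact (lookup a i)) else 0)"

lemma add_diff_single_one:
  "1 \<le> lookup a i \<Longrightarrow> a = Poly_Mapping.single i 1 + (a - Poly_Mapping.single i (1::nat))"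
  by (auto simp: poly_mapping_eq_iff fun_eq_iff lookup_add lookup_minus lookup_single when_def)

lemma lookup_var_sum_times:
  "lookup (var_sum n * p) a = (\<Sum>i<n. lookup p (a - Poly_Mapping.single i 1) when 1 \<le> lookup a i)"
proof -
  have "(\<exists>b. a = Poly_Mapping.single i 1 + b) \<longleftrightarrow> 1 \<le> lookup a i" for i
    using add_diff_single_one[of a i] by (auto simp: lookup_add)
  then show ?thesis
    unfolding var_sum_def sum_distrib_right lookup_sum lookup_single_times by simp
qed

lemma diff_single_in_monos_deg_iff:
  assumes "i < n" "1 \<le> lookup a i"
  shows "a - Poly_Mapping.single i 1 \<in> monos_deg n N \<longleftrightarrow> a \<in> monos_deg n (Suc N)"
proof -
  have single: "Poly_Mapping.single i 1 \<in> monos_deg n 1"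
    using assms(1) by (simp add: monos_deg_def mdeg_single)
  have dec: "a = Poly_Mapping.single i 1 + (a - Poly_Mapping.single i 1)"
    using add_diff_single_one[OF assms(2)] .
  show ?thesis
  proof
    assume "a - Poly_Mapping.single i 1 \<in> monos_deg n N"
    then show "a \<in> monos_deg n (Suc N)"
      using monos_deg_add[OF single] dec by force
  next
    assume "a \<in> monos_deg n (Suc N)"
    moreover have "mdeg a = 1 + mdeg (a - Poly_Mapping.single i 1)"
      using dec mdeg_add mdeg_single by metis
    ultimately show "a - Poly_Mapping.single i 1 \<in> monos_deg n N"
      using keys_diff_nat[of a] by (auto simp: monos_deg_def)
  qed
qed

lemma prod_fact_diff_single:
  fixes a :: "nat \<Rightarrow>\<^sub>0 nat"
  assumes "i < n" "1 \<le> lookup a i"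
  shows "(\<Prod>j<n. fact (lookup (a - Poly_Mapping.single i 1) j)) * real (lookup a i)
       = (\<Prod>j<n. fact (lookup a j) :: real)"
proof -
  let ?a' = "a - Poly_Mapping.single i 1"
  have "(\<Prod>j<n. fact (lookup ?a' j)) * real (lookup a i)
      = (fact (lookup a i - 1) * real (lookup a i)) * (\<Prod>j\<in>{..<n}-{i}. fact (lookup ?a' j) :: real)"
    using assms(1) by (simp add: prod.remove lookup_minus)
  also have "fact (lookup a i - 1) * real (lookup a i) = fact (lookup a i)"
    using assms(2) by (metis fact_reduce mult.commute of_nat_0_less_iff less_le_trans zero_less_one)
  also have "(\<Prod>j\<in>{..<n}-{i}. fact (lookup ?a' j) :: real) = (\<Prod>j\<in>{..<n}-{i}. fact (lookup a j))"
    by (rule prod.cong) (auto simp: lookup_minus lookup_single when_def)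
  finally show ?thesis
    using assms(1) by (simp add: prod.remove)
qed

lemma multinomial_coeff_Suc:
  "multinomial_coeff n (Suc N) a
     = (\<Sum>i<n. multinomial_coeff n N (a - Poly_Mapping.single i 1) when 1 \<le> lookup a i)"
proof (cases "a \<in> monos_deg n (Suc N)")
  case True
  let ?P = "\<Prod>j<n. fact (lookup a j) :: real"
  have "(multinomial_coeff n N (a - Poly_Mapping.single i 1) when 1 \<le> lookup a i)
      = fact N * real (lookup a i) / ?P" if "i < n" for i
  proof (cases "1 \<le> lookup a i")
    case True
    then show ?thesis
      using prod_fact_diff_single[OF \<open>i < n\<close> True, symmetric]
        diff_single_in_monos_deg_iff[OF \<open>i < n\<close> True] \<open>a \<in> monos_deg n (Suc N)\<close>
      by (simp add: multinomial_coeff_def)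
  qed simp
  then have "(\<Sum>i<n. multinomial_coeff n N (a - Poly_Mapping.single i 1) when 1 \<le> lookup a i)
      = fact N * real (\<Sum>i<n. lookup a i) / ?P"
    by (simp add: sum_divide_distrib[symmetric] sum_distrib_left)
  also have "(\<Sum>i<n. lookup a i) = Suc N"
    using True by (rule sum_lookup_monos_deg)
  finally show ?thesis
    using True by (simp add: multinomial_coeff_def fact_Suc mult.commute)
next
  case False
  then have "(multinomial_coeff n N (a - Poly_Mapping.single i 1) when 1 \<le> lookup a i) = 0"
    if "i < n" for i
    using diff_single_in_monos_deg_iff[OF that] by (auto simp: multinomial_coeff_def when_def)
  then show ?thesis
    using False by (simp add: multinomial_coeff_def)
qed

lemma lookup_var_sum_power: "lookup (var_sum n ^ N) a = multinomial_coeff n N a"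
proof (induction N arbitrary: a)
  case 0
  show ?case
    by (simp add: multinomial_coeff_def monos_deg_def lookup_one mdeg_eq_0_iff when_def)
next
  case (Suc N)
  then show ?case
    by (simp add: lookup_var_sum_times multinomial_coeff_Suc)
qed

lemma is_form_var_sum_power: "is_form n N (var_sum n ^ N)"
  by (auto simp: is_form_def in_keys_iff lookup_var_sum_power multinomial_coeff_def split: if_splits)

lemma coeff_nonneg_var_sum_power: "coeff_nonneg (var_sum n ^ N)"
  by (auto simp: coeff_nonneg_iff lookup_var_sum_power multinomial_coeff_def
      intro!: divide_nonneg_nonneg prod_nonneg)

lemma lookup_var_sum_power_pos: "a \<in> monos_deg n N \<Longrightarrow> lookup (var_sum n ^ N) a > 0"
  by (simp add: lookup_var_sum_power multinomial_coeff_def prod_pos)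

section \<open>Polya's theorem\<close>

definition falling_fact :: "nat \<Rightarrow> nat \<Rightarrow> real" where
  "falling_fact a b = (\<Prod>j<b. real a - real j)"

lemma falling_fact_times_fact: "b \<le> a \<Longrightarrow> falling_fact a b * fact (a - b) = fact a"
proof (induction b)
  case (Suc b)
  have "a - b = Suc (a - Suc b)"
    using Suc.prems by arith
  then have "(fact (a - b) :: real) = (real a - real b) * fact (a - Suc b)"
    using Suc.prems by (simp add: of_nat_diff)
  then show ?case
    using Suc by (simp add: falling_fact_def)
qed (simp add: falling_fact_def)

lemma falling_fact_eq_0: "a < b \<Longrightarrow> falling_fact a b = 0"
  unfolding falling_fact_def by (rule prod_zero) auto

lemma falling_fact_scale:
  assumes "t > 0"
  shows "falling_fact a b = t ^ b * (\<Prod>j<b. real a / t - real j / t)"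
proof -
  have "falling_fact a b = (\<Prod>j<b. t * (real a / t - real j / t))"
    unfolding falling_fact_def by (rule prod.cong) (use assms in \<open>auto simp: field_simps\<close>)
  then show ?thesis
    by (simp add: prod.distrib)
qed

lemma fact_add_le: "(fact (N + e) :: real) \<le> fact N * real (N + e) ^ e"
proof (induction e)
  case (Suc e)
  have "(fact (N + Suc e) :: real) = real (N + Suc e) * fact (N + e)"
    by (simp add: fact_Suc)
  also have "\<dots> \<le> real (N + Suc e) * (fact N * real (N + e) ^ e)"
    using Suc by (intro mult_left_mono) auto
  also have "\<dots> \<le> real (N + Suc e) * (fact N * real (N + Suc e) ^ e)"
    by (intro mult_left_mono power_mono) auto
  finally show ?case
    by simp
qed simp

lemma multinomial_coeff_diff:
  assumes b: "b \<in> monos_deg n e" and a: "a \<in> monos_deg n (N + e)"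
  shows "(multinomial_coeff n N (a - b) when (\<exists>c. a = b + c)) * (\<Prod>i<n. fact (lookup a i))
       = fact N * (\<Prod>i<n. falling_fact (lookup a i) (lookup b i))"
proof (cases "\<exists>c. a = b + c")
  case True
  then obtain c where c: "a = b + c" by blast
  have le: "lookup b i \<le> lookup a i" for i
    using c by (simp add: lookup_add)
  have "mdeg a = mdeg b + mdeg c"
    using c mdeg_add by blast
  then have "a - b \<in> monos_deg n N"
    using a b c keys_diff_nat[of a b] by (auto simp: monos_deg_def)
  moreover have "(\<Prod>i<n. fact (lookup a i) :: real)
      = (\<Prod>i<n. falling_fact (lookup a i) (lookup b i)) * (\<Prod>i<n. fact (lookup a i - lookup b i))"
    by (simp add: falling_fact_times_fact le prod.distrib[symmetric])
  ultimately show ?thesis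
    using True by (simp add: multinomial_coeff_def lookup_minus)
next
  case False
  then obtain i where i: "lookup a i < lookup b i"
    unfolding ex_add_iff_lookup_le by (auto simp: not_le)
  then have "i \<in> keys b"
    by (auto simp: in_keys_iff)
  then have "i < n"
    using b by (auto simp: monos_deg_def)
  then have "(\<Prod>i<n. falling_fact (lookup a i) (lookup b i)) = 0"
    using i falling_fact_eq_0 by (intro prod_zero) auto
  then show ?thesis
    using False by simp
qed

lemma lookup_var_sum_power_times_form:
  assumes g: "is_form n e g" and a: "a \<in> monos_deg n (N + e)"
  shows "lookup (var_sum n ^ N * g) a * (\<Prod>i<n. fact (lookup a i))
       = fact N * (\<Sum>b\<in>keys g. lookup g b * (\<Prod>i<n. falling_fact (lookup a i) (lookup b i)))"
proof -
  have "lookup (var_sum n ^ N * g) a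
      = (\<Sum>b\<in>keys g. lookup g b * multinomial_coeff n N (a - b) when (\<exists>c. a = b + c))"
    by (simp add: mult.commute[of "var_sum n ^ N"] lookup_times_diff lookup_var_sum_power)
  then have "lookup (var_sum n ^ N * g) a * (\<Prod>i<n. fact (lookup a i))
      = (\<Sum>b\<in>keys g. lookup g b *
           ((multinomial_coeff n N (a - b) when (\<exists>c. a = b + c)) * (\<Prod>i<n. fact (lookup a i))))"
    by (auto simp: sum_distrib_right when_def intro!: sum.cong)
  also have "\<dots> = (\<Sum>b\<in>keys g. lookup g b * (fact N * (\<Prod>i<n. falling_fact (lookup a i) (lookup b i))))"
    using g a multinomial_coeff_diff by (auto simp: is_form_def intro!: sum.cong)
  finally show ?thesis
    by (simp add: sum_distrib_left mult_ac)
qed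

lemma prod_falling_approx:
  fixes t :: real and y :: "nat \<Rightarrow> real"
  assumes b: "b \<in> monos_deg n e" and t: "0 < t" "real e \<le> t"
    and y: "\<And>i. i < n \<Longrightarrow> 0 \<le> y i \<and> y i \<le> 1"
  shows "\<bar>(\<Prod>i<n. \<Prod>j<lookup b i. y i - real j / t) - (\<Prod>i<n. y i ^ lookup b i)\<bar>
         \<le> real e * real e / t"
proof -
  let ?S = "SIGMA i:{..<n}. {..<lookup b i}"
  define z where "z = (\<lambda>(i, j). y i - real j / t)"
  define w where "w = (\<lambda>(i, j :: nat). y i)"
  have j_le: "real j \<le> real e" if "(i, j) \<in> ?S" for i j
    using that lookup_le_monos_deg[OF b, of i] by simp
  have j_div: "0 \<le> real j / t \<and> real j / t \<le> 1" if "(i, j) \<in> ?S" for i j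
    using j_le[OF that] t by (simp add: field_simps)
  have zw: "\<bar>z x\<bar> \<le> 1 \<and> \<bar>w x\<bar> \<le> 1" if x: "x \<in> ?S" for x
  proof -
    obtain i j where "x = (i, j)" "(i, j) \<in> ?S"
      using x by (cases x) auto
    then show ?thesis
      using j_div[of i j] y[of i] by (auto simp: z_def w_def abs_le_iff)
  qed
  have "norm (prod z ?S - prod w ?S) \<le> (\<Sum>x\<in>?S. norm (z x - w x))"
    by (rule norm_prod_diff) (simp_all add: zw)
  then have "\<bar>prod z ?S - prod w ?S\<bar> \<le> (\<Sum>x\<in>?S. \<bar>z x - w x\<bar>)"
    by simp
  also have "\<dots> \<le> (\<Sum>x\<in>?S. real e / t)"
    using j_le t by (intro sum_mono) (auto simp: z_def w_def divide_right_mono)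
  also have "\<dots> = real e * real e / t"
    using sum_lookup_monos_deg[OF b] by simp
  finally show ?thesis
    by (simp add: z_def w_def prod.Sigma[symmetric])
qed

lemma prod_falling_fact_scale:
  assumes "0 < t" "b \<in> monos_deg n e"
  shows "(\<Prod>i<n. falling_fact (lookup a i) (lookup b i))
       = t ^ e * (\<Prod>i<n. \<Prod>j<lookup b i. real (lookup a i) / t - real j / t)"
proof -
  have "(\<Prod>i<n. t ^ lookup b i) = t ^ e"
    using assms(2) by (simp add: power_sum[symmetric] sum_lookup_monos_deg)
  then show ?thesis
    by (simp add: falling_fact_scale[OF assms(1)] prod.distrib)
qed

lemma var_sum_power_times_form_approx:
  assumes g: "is_form n e g" and a: "a \<in> monos_deg n (N + e)" and pos: "0 < N + e"
  defines "t \<equiv> real (N + e)"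
  shows "\<bar>lookup (var_sum n ^ N * g) a * (\<Prod>i<n. fact (lookup a i)) / (fact N * t ^ e)
            - peval g (\<lambda>i. real (lookup a i) / t)\<bar>
         \<le> (\<Sum>b\<in>keys g. \<bar>lookup g b\<bar>) * (real e * real e / t)"
proof -
  define y where "y = (\<lambda>i. real (lookup a i) / t)"
  define Q where "Q = (\<lambda>b. \<Prod>i<n. \<Prod>j<lookup b i. y i - real j / t)"
  have t: "0 < t" "real e \<le> t"
    unfolding t_def using pos by (simp only: of_nat_0_less_iff) simp
  have y: "0 \<le> y i \<and> y i \<le> 1" for i
    using lookup_le_monos_deg[OF a, of i] t by (simp add: y_def t_def field_simps)
  have b: "b \<in> monos_deg n e" if "b \<in> keys g" for b
    using that g by (auto simp: is_form_def)
  have "lookup (var_sum n ^ N * g) a * (\<Prod>i<n. fact (lookup a i))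
      = fact N * (\<Sum>b\<in>keys g. lookup g b * (\<Prod>i<n. falling_fact (lookup a i) (lookup b i)))"
    by (rule lookup_var_sum_power_times_form[OF g a])
  also have "\<dots> = fact N * t ^ e * (\<Sum>b\<in>keys g. lookup g b * Q b)"
    using t(1) b by (auto simp: prod_falling_fact_scale Q_def y_def sum_distrib_left mult_ac
        intro!: sum.cong)
  finally have "lookup (var_sum n ^ N * g) a * (\<Prod>i<n. fact (lookup a i)) / (fact N * t ^ e)
      = (\<Sum>b\<in>keys g. lookup g b * Q b)"
    using t(1) by simp
  moreover have "\<bar>(\<Sum>b\<in>keys g. lookup g b * Q b) - peval g y\<bar>
      \<le> (\<Sum>b\<in>keys g. \<bar>lookup g b\<bar> * \<bar>Q b - (\<Prod>i<n. y i ^ lookup b i)\<bar>)"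
    by (simp add: peval_form[OF g] sum_subtractf[symmetric] right_diff_distrib[symmetric]
        order_trans[OF sum_abs] abs_mult)
  moreover have "\<dots> \<le> (\<Sum>b\<in>keys g. \<bar>lookup g b\<bar> * (real e * real e / t))"
    unfolding Q_def using b t y by (intro sum_mono mult_left_mono prod_falling_approx) auto
  ultimately show ?thesis
    by (simp only: y_def sum_distrib_right[symmetric])
qed

definition std_simplex :: "nat \<Rightarrow> (nat \<Rightarrow> real) set" where
  "std_simplex n = {y. (\<forall>i<n. 0 \<le> y i) \<and> (\<forall>i\<ge>n. y i = 0) \<and> (\<Sum>i<n. y i) = 1}"

lemma compact_std_simplex: "compact (std_simplex n)"
proof -
  define T where "T = (\<lambda>i::nat. if i < n then {0..1::real} else {0})"
  have "compactin (product_topology (\<lambda>i. euclidean) UNIV) (Pi\<^sub>E UNIV T)"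
    unfolding compactin_PiE by (auto simp: T_def)
  then have "compact (Pi\<^sub>E UNIV T)"
    by (simp add: euclidean_product_topology)
  moreover have "closed {y::nat \<Rightarrow> real. (\<Sum>i<n. y i) = 1}"
    by (rule closed_Collect_eq) (intro continuous_intros continuous_on_product_coordinates)+
  moreover have "std_simplex n = Pi\<^sub>E UNIV T \<inter> {y. (\<Sum>i<n. y i) = 1}"
  proof (intro set_eqI iffI)
    fix y assume y: "y \<in> std_simplex n"
    have "y i \<le> 1" if "i < n" for i
      using member_le_sum[of i "{..<n}" y] y that by (auto simp: std_simplex_def)
    with y show "y \<in> Pi\<^sub>E UNIV T \<inter> {y. (\<Sum>i<n. y i) = 1}"
      by (auto simp: std_simplex_def T_def PiE_iff)
  next
    fix y assume y: "y \<in> Pi\<^sub>E UNIV T \<inter> {y. (\<Sum>i<n. y i) = 1}"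
    then have T: "y i \<in> T i" for i
      by (auto simp: PiE_iff)
    have "0 \<le> y i" if "i < n" for i
      using T[of i] that by (simp add: T_def)
    moreover have "y i = 0" if "n \<le> i" for i
      using T[of i] that by (simp add: T_def)
    ultimately show "y \<in> std_simplex n"
      using y by (simp add: std_simplex_def)
  qed
  ultimately show ?thesis
    by (simp add: compact_Int_closed)
qed

lemma continuous_on_peval: "continuous_on UNIV (peval g)"
  unfolding peval_def by (intro continuous_intros continuous_on_product_coordinates)

lemma form_bounded_below_on_simplex:
  assumes "n \<ge> 1"
    and g_pos: "\<And>x. (\<forall>i<n. x i \<ge> 0) \<Longrightarrow> (\<exists>i<n. x i \<noteq> 0) \<Longrightarrow> peval g x > 0"
  obtains m where "m > 0" "\<And>y. y \<in> std_simplex n \<Longrightarrow> m \<le> peval g y"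
proof -
  have "(\<lambda>i. if i = 0 then 1 else 0) \<in> std_simplex n"
    using assms(1) by (auto simp: std_simplex_def sum.delta')
  then obtain x0 where x0: "x0 \<in> std_simplex n" "\<And>y. y \<in> std_simplex n \<Longrightarrow> peval g x0 \<le> peval g y"
    using continuous_attains_inf[OF compact_std_simplex _ continuous_on_subset[OF continuous_on_peval]]
    by blast
  moreover have "\<exists>i<n. x0 i \<noteq> 0"
  proof (rule ccontr)
    assume "\<not> (\<exists>i<n. x0 i \<noteq> 0)"
    then show False
      using x0(1) by (simp add: std_simplex_def)
  qed
  ultimately have "peval g x0 > 0"
    by (intro g_pos) (auto simp: std_simplex_def)
  then show ?thesis
    using that x0(2) by blast
qed

lemma polya_coeff_bound:
  assumes g: "is_form n e g" and a: "a \<in> monos_deg n (N + e)" and pos: "0 < N + e"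
    and m: "\<And>y. y \<in> std_simplex n \<Longrightarrow> m \<le> peval g y"
    and large: "(\<Sum>b\<in>keys g. \<bar>lookup g b\<bar>) * (real e * real e / real (N + e)) \<le> m / 2"
  shows "m / 2 * multinomial_coeff n (N + e) a \<le> lookup (var_sum n ^ N * g) a"
proof -
  define t where "t = real (N + e)"
  define P where "P = (\<Prod>i<n. fact (lookup a i) :: real)"
  define c where "c = lookup (var_sum n ^ N * g) a * P / (fact N * t ^ e)"
  have "0 < t"
    unfolding t_def using pos by (simp only: of_nat_0_less_iff)
  have "0 < P"
    by (simp add: P_def prod_pos)
  have "0 \<le> (\<Sum>b\<in>keys g. \<bar>lookup g b\<bar>) * (real e * real e / real (N + e))"
    by (intro mult_nonneg_nonneg sum_nonneg) auto
  then have "0 \<le> m"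
    using large by linarith
  have "(\<lambda>i. real (lookup a i) / t) \<in> std_simplex n"
  proof -
    have "(\<Sum>i<n. real (lookup a i)) = t"
      unfolding t_def by (metis sum_lookup_monos_deg[OF a] of_nat_sum)
    moreover have "lookup a i = 0" if "n \<le> i" for i
      using a that by (auto simp: monos_deg_def in_keys_iff)
    ultimately show ?thesis
      using \<open>0 < t\<close> by (simp add: std_simplex_def sum_divide_distrib[symmetric])
  qed
  then have "m \<le> peval g (\<lambda>i. real (lookup a i) / t)"
    by (rule m)
  then have "m / 2 \<le> c"
    using var_sum_power_times_form_approx[OF g a pos] large
    unfolding c_def P_def t_def abs_le_iff by linarith
  have "m / 2 * multinomial_coeff n (N + e) a = m / 2 * fact (N + e) / P"
    using a by (simp add: multinomial_coeff_def P_def)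
  also have "\<dots> \<le> m / 2 * (fact N * t ^ e) / P"
    using fact_add_le[of N e] \<open>0 \<le> m\<close> \<open>0 < P\<close>
    by (intro divide_right_mono mult_left_mono) (auto simp: t_def)
  also have "\<dots> \<le> c * (fact N * t ^ e) / P"
    using \<open>m / 2 \<le> c\<close> \<open>0 < t\<close> \<open>0 < P\<close> by (intro divide_right_mono mult_right_mono) auto
  also have "\<dots> = lookup (var_sum n ^ N * g) a"
    using \<open>0 < t\<close> \<open>0 < P\<close> by (simp add: c_def)
  finally show ?thesis .
qed

theorem polya:
  assumes g: "is_form n e g" and n: "n \<ge> 1"
    and g_pos: "\<And>x. (\<forall>i<n. x i \<ge> 0) \<Longrightarrow> (\<exists>i<n. x i \<noteq> 0) \<Longrightarrow> peval g x > 0"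
  obtains \<epsilon> N where "\<epsilon> > 0"
    "\<And>M. N \<le> M \<Longrightarrow> coeff_le (const_poly \<epsilon> * var_sum n ^ (M + e)) (var_sum n ^ M * g)"
proof -
  obtain m where m: "m > 0" "\<And>y. y \<in> std_simplex n \<Longrightarrow> m \<le> peval g y"
    using form_bounded_below_on_simplex[OF n g_pos] by blast
  define A where "A = (\<Sum>b\<in>keys g. \<bar>lookup g b\<bar>)"
  define N where "N = nat \<lceil>2 * A * real e * real e / m\<rceil> + 1"
  have N: "1 \<le> N" "2 * A * real e * real e / m \<le> real N"
    unfolding N_def by linarith+
  have "coeff_le (const_poly (m / 2) * var_sum n ^ (M + e)) (var_sum n ^ M * g)" if "N \<le> M" for M
    unfolding coeff_le_def lookup_const_poly_times lookup_var_sum_power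
  proof
    fix a
    show "m / 2 * multinomial_coeff n (M + e) a \<le> lookup (var_sum n ^ M * g) a"
    proof (cases "a \<in> monos_deg n (M + e)")
      case True
      have "2 * A * real e * real e / m \<le> real (M + e)"
        using that N(2) by simp
      then have "A * (real e * real e / real (M + e)) \<le> m / 2"
        using that N(1) m(1) by (simp add: field_simps)
      then show ?thesis
        using polya_coeff_bound[OF g True _ m(2)] that N(1) by (simp add: A_def)
    next
      case False
      then show ?thesis
        using lookup_form_eq_0[OF is_form_times[OF is_form_var_sum_power g] False]
        by (simp add: multinomial_coeff_def)
    qed
  qed
  then show ?thesis
    using that[of "m / 2" N] m(1) by simp
qed

section \<open>Compensating negative terms in a binomial expansion\<close>

lemma binomial_shift_ge:
  assumes "k < K" "4 * K \<le> l"
  shows "real (l choose k) * ((real l - real K) / real K) \<le> real (l choose (k + K))"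
proof -
  have "real (l choose k) * ((real l - real K) / real K)
      \<le> real (l choose k) * ((real l - real k) / real (Suc k))"
  proof (rule mult_left_mono)
    have "(real l - real K) / real K \<le> (real l - real K) / real (Suc k)"
      using assms by (intro divide_left_mono) auto
    also have "\<dots> \<le> (real l - real k) / real (Suc k)"
      using assms by (intro divide_right_mono) auto
    finally show "(real l - real K) / real K \<le> (real l - real k) / real (Suc k)" .
  qed simp
  also have "\<dots> = real (l choose Suc k)"
  proof -
    have "real (l - k) * real (l choose k) = real (Suc k) * real (l choose Suc k)"
      using binomial_absorb_comp[of l k] binomial_absorption[of k l] by (metis of_nat_mult)
    moreover have "real (l - k) = real l - real k"
      using assms by simp
    ultimately show ?thesis
      by (simp add: field_simps)
  qed
  also have "\<dots> \<le> real (l choose (k + K))"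
    using binomial_mono[of "Suc k" "k + K" l] assms by simp
  finally show ?thesis .
qed

lemma binomial_shift_dominates:
  fixes R :: real
  assumes "1 \<le> K"
  obtains l where "4 * K \<le> l" "\<And>k. k < K \<Longrightarrow> real (l choose k) * R \<le> real (l choose (k + K))"
proof
  define l where "l = 4 * K + K * nat \<lceil>R\<rceil>"
  show "4 * K \<le> l"
    by (simp add: l_def)
  have "(real l - real K) / real K = 3 + real (nat \<lceil>R\<rceil>)"
    using assms by (simp add: l_def field_simps)
  then have "R \<le> (real l - real K) / real K"
    by linarith
  then show "real (l choose k) * R \<le> real (l choose (k + K))" if "k < K" for k
    using binomial_shift_ge[OF that \<open>4 * K \<le> l\<close>] by (meson mult_left_mono of_nat_0_le_iff order_trans)
qed

lemma sum_atMost_pair_shift: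
  fixes T :: "nat \<Rightarrow> 'a::comm_monoid_add"
  assumes "2 * K \<le> l"
  shows "(\<Sum>k\<le>l. T k) = T l + ((\<Sum>k<K. T k + T (k + K)) + (\<Sum>k\<in>{2 * K..<l}. T k))"
proof -
  have "(\<Sum>k\<le>l. T k) = T l + (\<Sum>k<l. T k)"
    by (simp add: lessThan_Suc_atMost[symmetric] add.commute)
  also have "(\<Sum>k<l. T k) = (\<Sum>k<2 * K. T k) + (\<Sum>k\<in>{2 * K..<l}. T k)"
    using assms by (simp add: lessThan_atLeast0 sum.atLeastLessThan_concat)
  also have "(\<Sum>k<2 * K. T k) = (\<Sum>k<K. T k) + (\<Sum>k<K. T (k + K))"
    by (simp add: lessThan_atLeast0 mult_2 sum.atLeastLessThan_concat[symmetric, of 0 K "K + K"]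
        sum.shift_bounds_nat_ivl[of T 0 K K, symmetric] add.commute)
  finally show ?thesis
    by (simp add: sum.distrib)
qed

text \<open>Applied below with D = s^d, E = s^e and f = c D + h.\<close>

locale binomial_compensation =
  fixes D E g h :: rpoly and c C M \<epsilon> :: real and K :: nat
  assumes D_nonneg: "coeff_nonneg D" and E_nonneg: "coeff_nonneg E"
    and h_nonneg: "coeff_nonneg h" and h_le: "coeff_le h (const_poly C * D)"
    and g_ge: "coeff_le (const_poly (- M) * E) g" and M_nonneg: "0 \<le> M"
    and c_pos: "0 < c" and eps_pos: "0 < \<epsilon>" and K_pos: "1 \<le> K"
    and eventually_dominates: "\<And>k. K \<le> k \<Longrightarrow> coeff_le (const_poly \<epsilon> * (D ^ k * E)) (D ^ k * g)"
begin

definition expansion_term :: "nat \<Rightarrow> nat \<Rightarrow> rpoly" where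
  "expansion_term l k = const_poly (real (l choose k) * c ^ k) * (h ^ (l - k) * (D ^ k * g))"

lemma binomial_expansion: "(const_poly c * D + h) ^ l * g = (\<Sum>k\<le>l. expansion_term l k)"
proof -
  have "(const_poly c * D + h) ^ l * g
      = (\<Sum>k\<le>l. of_nat (l choose k) * (const_poly c * D) ^ k * h ^ (l - k) * g)"
    by (simp add: binomial_ring sum_distrib_right)
  also have "\<dots> = (\<Sum>k\<le>l. expansion_term l k)"
    by (simp add: expansion_term_def of_nat_eq_const_poly power_mult_distrib const_poly_power
        const_poly_times[symmetric] mult_ac)
  finally show ?thesis .
qed

lemma expansion_term_nonneg:
  assumes "K \<le> k"
  shows "coeff_nonneg (expansion_term l k)"
proof -
  have "coeff_nonneg (const_poly \<epsilon> * (D ^ k * E))"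
    using eps_pos D_nonneg E_nonneg
    by (intro coeff_nonneg_const_poly_times coeff_nonneg_times coeff_nonneg_power) simp_all
  also have "coeff_le (const_poly \<epsilon> * (D ^ k * E)) (D ^ k * g)"
    using assms by (rule eventually_dominates)
  finally have "coeff_nonneg (D ^ k * g)" .
  then show ?thesis
    unfolding expansion_term_def using c_pos
    by (intro coeff_nonneg_const_poly_times coeff_nonneg_times[OF coeff_nonneg_power[OF h_nonneg]])
      simp_all
qed

lemma shifted_term_lower_bound:
  assumes "k + K \<le> l"
  shows "coeff_le (const_poly (- (M * C ^ K)) * (h ^ (l - (k + K)) * (D ^ (k + K) * E)))
           (h ^ (l - k) * (D ^ k * g))"
proof -
  define P where "P = h ^ (l - (k + K)) * D ^ k * E"
  have "coeff_nonneg P"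
    unfolding P_def using D_nonneg E_nonneg h_nonneg
    by (intro coeff_nonneg_times coeff_nonneg_power)
  then have "coeff_le (h ^ K * P) ((const_poly C * D) ^ K * P)"
    using h_le h_nonneg by (intro coeff_le_times_right coeff_le_power)
  moreover have "h ^ K * P = h ^ (l - k) * D ^ k * E"
    using assms by (simp add: P_def power_add[symmetric] mult.assoc)
  moreover have "(const_poly C * D) ^ K * P
      = const_poly (C ^ K) * (h ^ (l - (k + K)) * (D ^ (k + K) * E))"
    by (simp add: P_def power_mult_distrib const_poly_power power_add mult_ac)
  ultimately have "coeff_le (h ^ (l - k) * D ^ k * E)
      (const_poly (C ^ K) * (h ^ (l - (k + K)) * (D ^ (k + K) * E)))"
    by simp
  then have "coeff_le (const_poly M * (h ^ (l - k) * D ^ k * E))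
      (const_poly M * (const_poly (C ^ K) * (h ^ (l - (k + K)) * (D ^ (k + K) * E))))"
    using M_nonneg by (rule coeff_le_const_poly_times)
  then have "coeff_le (const_poly (- (M * C ^ K)) * (h ^ (l - (k + K)) * (D ^ (k + K) * E)))
      (const_poly (- M) * (h ^ (l - k) * D ^ k * E))"
    by (drule_tac coeff_le_uminus)
      (simp only: mult.assoc[of "const_poly M" "const_poly (C ^ K)", symmetric]
        const_poly_times uminus_const_poly_times)
  also have "coeff_le (const_poly (- M) * (h ^ (l - k) * D ^ k * E)) (h ^ (l - k) * (D ^ k * g))"
  proof -
    have "coeff_nonneg (h ^ (l - k) * D ^ k)"
      using D_nonneg h_nonneg by (intro coeff_nonneg_times coeff_nonneg_power)
    then have "coeff_le (h ^ (l - k) * D ^ k * (const_poly (- M) * E)) (h ^ (l - k) * D ^ k * g)"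
      by (rule coeff_le_times_left[OF g_ge])
    then show ?thesis
      by (simp only: mult.assoc mult.left_commute[of "const_poly (- M)"])
  qed
  finally show ?thesis .
qed

lemma expansion_term_pair_nonneg:
  assumes "k < K" "k + K \<le> l"
    and binomial: "real (l choose k) * c ^ k * (M * C ^ K) \<le> real (l choose (k + K)) * c ^ (k + K) * \<epsilon>"
  shows "coeff_nonneg (expansion_term l k + expansion_term l (k + K))"
proof -
  define j where "j = k + K"
  define P where "P = h ^ (l - j) * (D ^ j * E)"
  define a where "a = real (l choose k) * c ^ k"
  define b where "b = real (l choose j) * c ^ j"
  have "a \<ge> 0" "b \<ge> 0"
    using c_pos by (simp_all add: a_def b_def)
  have "coeff_le (const_poly a * (const_poly (- (M * C ^ K)) * P)) (expansion_term l k)"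
    unfolding expansion_term_def a_def[symmetric] P_def j_def
    using shifted_term_lower_bound[OF assms(2)] \<open>a \<ge> 0\<close> by (rule coeff_le_const_poly_times)
  then have lower_k: "coeff_le (const_poly (- (a * (M * C ^ K))) * P) (expansion_term l k)"
    by (simp add: mult.assoc[symmetric] const_poly_times)
  have "coeff_le (const_poly b * (h ^ (l - j) * (const_poly \<epsilon> * (D ^ j * E))))
      (expansion_term l j)"
    unfolding expansion_term_def b_def[symmetric] using h_nonneg \<open>b \<ge> 0\<close>
    by (intro coeff_le_const_poly_times coeff_le_times_left eventually_dominates coeff_nonneg_power)
      (simp_all add: j_def)
  moreover have "const_poly b * (h ^ (l - j) * (const_poly \<epsilon> * (D ^ j * E))) = const_poly (b * \<epsilon>) * P"
    by (simp add: P_def const_poly_times[symmetric] mult_ac)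
  ultimately have lower_j: "coeff_le (const_poly (b * \<epsilon>) * P) (expansion_term l j)"
    by simp
  have P_nonneg: "coeff_nonneg P"
    unfolding P_def using D_nonneg E_nonneg h_nonneg
    by (intro coeff_nonneg_times coeff_nonneg_power)
  have gap: "0 \<le> b * \<epsilon> - a * (M * C ^ K)"
    using binomial by (simp add: a_def b_def j_def)
  show ?thesis
    unfolding coeff_nonneg_iff lookup_add
  proof
    fix w
    have "0 \<le> (b * \<epsilon> - a * (M * C ^ K)) * lookup P w"
      using P_nonneg gap by (simp add: coeff_nonneg_iff)
    moreover have "- (a * (M * C ^ K)) * lookup P w \<le> lookup (expansion_term l k) w"
      using lower_k by (simp add: coeff_le_def lookup_const_poly_times)
    moreover have "b * \<epsilon> * lookup P w \<le> lookup (expansion_term l j) w"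
      using lower_j by (simp add: coeff_le_def lookup_const_poly_times)
    ultimately show "0 \<le> lookup (expansion_term l k) w + lookup (expansion_term l (k + K)) w"
      unfolding left_diff_distrib mult_minus_left j_def by linarith
  qed
qed

lemma exists_dominating_power:
  obtains l where "1 \<le> l"
    "coeff_le (const_poly (c ^ l * \<epsilon>) * (D ^ l * E)) ((const_poly c * D + h) ^ l * g)"
proof -
  obtain l where l: "4 * K \<le> l"
    "\<And>k. k < K \<Longrightarrow> real (l choose k) * (M * C ^ K / (c ^ K * \<epsilon>)) \<le> real (l choose (k + K))"
    using binomial_shift_dominates[OF K_pos] by blast
  have "real (l choose k) * c ^ k * (M * C ^ K) \<le> real (l choose (k + K)) * c ^ (k + K) * \<epsilon>"
    if "k < K" for k
    using mult_left_mono[OF l(2)[OF that], of "c ^ k * (c ^ K * \<epsilon>)"] c_pos eps_pos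
    by (simp add: power_add field_simps)
  then have "coeff_nonneg (expansion_term l k + expansion_term l (k + K))" if "k < K" for k
    using that l(1) by (intro expansion_term_pair_nonneg) auto
  then have rest: "coeff_nonneg ((\<Sum>k<K. expansion_term l k + expansion_term l (k + K))
      + (\<Sum>k\<in>{2 * K..<l}. expansion_term l k))"
    using expansion_term_nonneg by (intro coeff_nonneg_add[OF coeff_nonneg_sum coeff_nonneg_sum]) auto
  have "coeff_le (const_poly (c ^ l) * (const_poly \<epsilon> * (D ^ l * E))) (expansion_term l l)"
    unfolding expansion_term_def using K_pos l(1) c_pos
    by (simp add: coeff_le_const_poly_times eventually_dominates)
  also have "coeff_le (expansion_term l l) ((const_poly c * D + h) ^ l * g)"
    unfolding binomial_expansion sum_atMost_pair_shift[of K l, OF order_trans[OF _ l(1)], simplified]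
    using coeff_le_add[OF coeff_le_refl rest] by simp
  finally show ?thesis
    using that[of l] K_pos l(1) by (simp add: mult.assoc[symmetric] const_poly_times)
qed

end

section \<open>Comparison of forms with powers of the sum of the variables\<close>

lemma keys_var_sum_power: "keys (var_sum n ^ d) = monos_deg n d"
  by (auto simp: in_keys_iff lookup_var_sum_power multinomial_coeff_def split: if_splits)

lemma finite_monos_deg: "finite (monos_deg n d)"
  using finite_keys[of "var_sum n ^ d"] by (simp add: keys_var_sum_power)

lemma form_abs_coeff_le_var_sum_power:
  assumes "is_form n d p"
  obtains M where "0 \<le> M" "\<And>w. \<bar>lookup p w\<bar> \<le> M * lookup (var_sum n ^ d) w"
proof
  define M where "M = (\<Sum>w\<in>keys p. \<bar>lookup p w\<bar> / lookup (var_sum n ^ d) w)"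
  have ratio_nonneg: "0 \<le> \<bar>lookup p w\<bar> / lookup (var_sum n ^ d) w" for w
    using coeff_nonneg_var_sum_power[of n d] by (simp add: coeff_nonneg_iff)
  then show "0 \<le> M"
    by (simp add: M_def sum_nonneg)
  show "\<bar>lookup p w\<bar> \<le> M * lookup (var_sum n ^ d) w" for w
  proof (cases "w \<in> keys p")
    case True
    then have "lookup (var_sum n ^ d) w > 0"
      using assms by (intro lookup_var_sum_power_pos) (auto simp: is_form_def)
    moreover have "\<bar>lookup p w\<bar> / lookup (var_sum n ^ d) w \<le> M"
      unfolding M_def using True ratio_nonneg by (intro member_le_sum) auto
    ultimately show ?thesis
      by (simp add: field_simps)
  next
    case False
    then show ?thesis
      using \<open>0 \<le> M\<close> coeff_nonneg_var_sum_power[of n d] by (simp add: in_keys_iff coeff_nonneg_iff)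
  qed
qed

lemma strictly_pos_form_ge_var_sum_power:
  assumes "strictly_pos_form n d f"
  obtains c where "0 < c" "coeff_le (const_poly c * var_sum n ^ d) f"
proof
  define R where "R = (\<lambda>w. lookup f w / lookup (var_sum n ^ d) w) ` monos_deg n d"
  define c where "c = Min (insert 1 R)"
  have "finite R"
    by (simp add: R_def finite_monos_deg)
  moreover have "0 < r" if "r \<in> R" for r
    using that assms by (auto simp: R_def strictly_pos_form_def lookup_var_sum_power_pos)
  ultimately show "0 < c"
    by (simp add: c_def)
  show "coeff_le (const_poly c * var_sum n ^ d) f"
    unfolding coeff_le_def lookup_const_poly_times
  proof
    fix w
    show "c * lookup (var_sum n ^ d) w \<le> lookup f w"
    proof (cases "w \<in> monos_deg n d")
      case True
      then have "c \<le> lookup f w / lookup (var_sum n ^ d) w"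
        using \<open>finite R\<close> by (simp add: c_def R_def)
      then show ?thesis
        using lookup_var_sum_power_pos[OF True] by (simp add: field_simps)
    next
      case False
      have "is_form n d f"
        using assms by (simp add: strictly_pos_form_def)
      then show ?thesis
        using False by (simp add: lookup_form_eq_0 lookup_var_sum_power multinomial_coeff_def)
    qed
  qed
qed

lemma strictly_pos_form_decompose:
  assumes "strictly_pos_form n d f"
  obtains c C h where "0 < c" "f = const_poly c * var_sum n ^ d + h"
    "coeff_nonneg h" "coeff_le h (const_poly C * var_sum n ^ d)"
proof -
  let ?D = "var_sum n ^ d"
  obtain c where "0 < c" and c: "coeff_le (const_poly c * ?D) f"
    using strictly_pos_form_ge_var_sum_power[OF assms] by blast
  have "is_form n d f"
    using assms by (simp add: strictly_pos_form_def)
  then obtain C where C: "\<And>w. \<bar>lookup f w\<bar> \<le> C * lookup ?D w"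
    using form_abs_coeff_le_var_sum_power by blast
  have "coeff_le (f - const_poly c * ?D) (const_poly C * ?D)"
    unfolding coeff_le_def lookup_minus lookup_const_poly_times
  proof
    fix w
    have "0 \<le> c * lookup ?D w"
      using \<open>0 < c\<close> coeff_nonneg_var_sum_power[of n d] by (simp add: coeff_nonneg_iff)
    then show "lookup f w - c * lookup ?D w \<le> C * lookup ?D w"
      using C[of w] by linarith
  qed
  moreover have "coeff_nonneg (f - const_poly c * ?D)"
    using c by (simp add: coeff_le_def lookup_minus lookup_const_poly_times)
  ultimately show ?thesis
    using that[of c "f - const_poly c * ?D" C] \<open>0 < c\<close> by simp
qed

lemma form_ge_neg_var_sum_power:
  assumes "is_form n e g"
  obtains M where "0 \<le> M" "coeff_le (const_poly (- M) * var_sum n ^ e) g"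
proof -
  obtain M where "0 \<le> M" "\<And>w. \<bar>lookup g w\<bar> \<le> M * lookup (var_sum n ^ e) w"
    using form_abs_coeff_le_var_sum_power[OF assms] by blast
  then show ?thesis
    using that by (simp add: coeff_le_def lookup_const_poly_times abs_le_iff minus_le_iff)
qed

lemma power_times_dominates_var_sum_power:
  assumes f_form: "strictly_pos_form n d f" and "1 \<le> d"
    and g_form: "is_form n e g" and "0 < \<epsilon>"
    and polya: "\<And>m. N \<le> m \<Longrightarrow> coeff_le (const_poly \<epsilon> * var_sum n ^ (m + e)) (var_sum n ^ m * g)"
  obtains a l where "0 < a" "1 \<le> l" "coeff_le (const_poly a * var_sum n ^ (l * d + e)) (f ^ l * g)"
proof -
  let ?s = "var_sum n"
  obtain c C h where "0 < c" and f: "f = const_poly c * ?s ^ d + h"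
    and h: "coeff_nonneg h" "coeff_le h (const_poly C * ?s ^ d)"
    using strictly_pos_form_decompose[OF f_form] by blast
  obtain M where "0 \<le> M" and M: "coeff_le (const_poly (- M) * ?s ^ e) g"
    using form_ge_neg_var_sum_power[OF g_form] by blast
  have "coeff_le (const_poly \<epsilon> * ((?s ^ d) ^ k * ?s ^ e)) ((?s ^ d) ^ k * g)" if "Suc N \<le> k" for k
  proof -
    have "k \<le> d * k"
      using mult_le_mono1[OF \<open>1 \<le> d\<close>, of k] by (simp only: mult_1)
    then have "N \<le> d * k"
      using that by linarith
    then show ?thesis
      using polya[of "d * k"] by (simp add: power_mult power_add mult.assoc)
  qed
  then interpret binomial_compensation "?s ^ d" "?s ^ e" g h c C M \<epsilon> "Suc N"
    using coeff_nonneg_var_sum_power h M \<open>0 \<le> M\<close> \<open>0 < c\<close> \<open>0 < \<epsilon>\<close>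
    by unfold_locales simp_all
  obtain l where "1 \<le> l"
    and "coeff_le (const_poly (c ^ l * \<epsilon>) * ((?s ^ d) ^ l * ?s ^ e)) (f ^ l * g)"
    using exists_dominating_power f by blast
  moreover have "(?s ^ d) ^ l * ?s ^ e = ?s ^ (l * d + e)"
    by (metis power_add power_mult mult.commute)
  ultimately show ?thesis
    using that[of "c ^ l * \<epsilon>" l] \<open>0 < c\<close> \<open>0 < \<epsilon>\<close> by simp
qed

lemma strictly_pos_form_if_dominates:
  assumes "is_form n d p" "0 < a" "coeff_le (const_poly a * var_sum n ^ d) p"
  shows "strictly_pos_form n d p"
  unfolding strictly_pos_form_def
proof (intro conjI ballI)
  fix w assume "w \<in> monos_deg n d"
  then have "0 < a * lookup (var_sum n ^ d) w"
    using assms(2) lookup_var_sum_power_pos by simp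
  also have "\<dots> \<le> lookup p w"
    using assms(3) by (simp add: coeff_le_def lookup_const_poly_times)
  finally show "0 < lookup p w" .
qed (rule assms(1))

lemma pos_vars_if_nonzero_form:
  assumes "is_form n d f" "1 \<le> d" "f \<noteq> 0"
  shows "1 \<le> n"
proof (rule ccontr)
  assume "\<not> 1 \<le> n"
  then have "monos_deg 0 d = {}" "n = 0"
    using assms(2) by (auto simp: monos_deg_def mdeg_def)
  then show False
    using assms(1,3) by (simp add: is_form_def)
qed

theorem mainTheorem4:
  fixes n d e :: nat and f g :: rpoly
  assumes f_form: "strictly_pos_form n d f"
    and f_nonconst: "d \<ge> 1" "f \<noteq> 0"
    and g_form: "is_form n e g"
    and g_pos: "\<And>x :: nat \<Rightarrow> real. (\<forall>i<n. x i \<ge> 0) \<Longrightarrow> (\<exists>i<n. x i \<noteq> 0) \<Longrightarrow> peval g x > 0"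
  shows "\<exists>l::nat. l \<ge> 1 \<and> strictly_pos_form n (l * d + e) (f ^ l * g)"
proof -
  have "1 \<le> n"
    using f_form f_nonconst pos_vars_if_nonzero_form[of n d f] by (simp add: strictly_pos_form_def)
  then obtain \<epsilon> N where "0 < \<epsilon>"
    "\<And>m. N \<le> m \<Longrightarrow> coeff_le (const_poly \<epsilon> * var_sum n ^ (m + e)) (var_sum n ^ m * g)"
    using polya[OF g_form _ g_pos] by blast
  then obtain a l where "0 < a" "1 \<le> l"
    "coeff_le (const_poly a * var_sum n ^ (l * d + e)) (f ^ l * g)"
    using power_times_dominates_var_sum_power[OF f_form f_nonconst(1) g_form] by blast
  moreover have "is_form n (l * d + e) (f ^ l * g)"
    using f_form g_form by (intro is_form_times is_form_power) (simp_all add: strictly_pos_form_def)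
  ultimately show ?thesis
    using strictly_pos_form_if_dominates by blast
qed

end
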